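(* Let $\alpha>\tfrac12$ and let $f$ be a slice regular function on the circular cone $C(\pi/\alpha)$, continuous on its closure $\overline{C(\pi/\alpha)}$. Suppose the order $\rho$ of $f$ satisfies $\rho<\alpha$. If there exists $M\ge0$ with $|f|\le M$ on $\partial C(\pi/\alpha)$, then $|f|\le M$ on $C(\pi/\alpha)$.
   Context: $\mathbb{H}$ denotes the quaternions, $|q|$ the Euclidean norm, $\mathbb{S}=\{ix_1+jx_2+kx_3: x_1^2+x_2^2+x_3^2=1\}$, and for $I\in\mathbb{S}$, $L_I=\mathbb{R}+\mathbb{R}I$; every $q\in\mathbb{H}$ can be written $q=re^{I\vartheta}=r(\cos\vartheta+I\sin\vartheta)$ with $r=|q|$, $I\in\mathbb{S}$, $\vartheta\in\mathbb{R}$. For $\Omega\subseteq\mathbb{H}$ set $\Omega_I=\Omega\cap L_I$. A function $f:\Omega\to\mathbb{H}$ on an open set $\Omega$ is slice regular if for every $I\in\mathbb{S}$ its restriction $f_I$ to $\Omega_I$ satisfies $\frac12\left(\frac{\partial}{\partial x}+I\frac{\partial}{\partial y}\right)f_I(x+yI)=0$ on $\Omega_I$. For $0<\varphi<2\pi$ the circular cone is $C(\varphi)=\{re^{I\vartheta}: r>0,\ |\vartheta|<\varphi/2,\ I\in\mathbb{S}\}$. For $f$ slice regular on $\Omega$ and continuous up to the boundary, set $M_f(r,\Omega)=\max\{|f(q)|: q\in\overline{\Omega},\ |q|=r\}$ and define the order of $f$ as $\rho=\limsup_{r\to+\infty}\frac{\ln^+\ln^+M_f(r,\Omega)}{\ln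 r}$, where $\ln^+x=\max\{\ln x,0\}$. *)

theory Defs
  imports "HOL-Analysis.Analysis"
begin

text \<open>Quaternions q = r + i x1 + j x2 + k x3 are represented as 4-tuples (r, x1, x2, x3).
The product norm on real*real*real*real is exactly the Euclidean norm on R^4.\<close>

type_synonym quat = "real \<times> real \<times> real \<times> real"

fun qmult :: "quat \<Rightarrow> quat \<Rightarrow> quat" (infixl "\<star>" 70) where
  "qmult (a1, b1, c1, d1) (a2, b2, c2, d2) =
     (a1*a2 - b1*b2 - c1*c2 - d1*d2,
      a1*b2 + b1*a2 + c1*d2 - d1*c2,
      a1*c2 - b1*d2 + c1*a2 + d1*b2,
      a1*d2 + b1*c2 - c1*b2 + d1*a2)"

definition qreal :: "real \<Rightarrow> quat" where
  "qreal x = (x, 0, 0, 0)"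

definition imag_units :: "quat set" where
  "imag_units = {(0, x1, x2, x3) | x1 x2 x3. x1^2 + x2^2 + x3^2 = 1}"

definition slice_pt :: "quat \<Rightarrow> real \<Rightarrow> real \<Rightarrow> quat" where
  "slice_pt I x y = qreal x + y *\<^sub>R I"

definition slice_regular :: "(quat \<Rightarrow> quat) \<Rightarrow> quat set \<Rightarrow> bool" where
  "slice_regular f \<Omega> \<longleftrightarrow> open \<Omega> \<and>
     (\<forall>I\<in>imag_units. \<forall>x y. slice_pt I x y \<in> \<Omega> \<longrightarrow>
        (\<exists>D. ((\<lambda>(s, t). f (slice_pt I s t)) has_derivative D) (at (x, y)) \<and>
             (1/2) *\<^sub>R (D (1, 0) + I \<star> D (0, 1)) = 0))"

definition qexpI :: "quat \<Rightarrow> real \<Rightarrow> quat" where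
  "qexpI I \<theta> = slice_pt I (cos \<theta>) (sin \<theta>)"

definition circ_cone :: "real \<Rightarrow> quat set" where
  "circ_cone \<phi> = {r *\<^sub>R qexpI I \<theta> | r I \<theta>. r > 0 \<and> \<bar>\<theta>\<bar> < \<phi> / 2 \<and> I \<in> imag_units}"

text \<open>ln^+ x = max (ln x) 0 (taken as 0 for x \<le> 1, in particular for x \<le> 0).\<close>
definition lnp :: "real \<Rightarrow> real" where
  "lnp x = (if x \<le> 1 then 0 else ln x)"

definition max_mod :: "(quat \<Rightarrow> quat) \<Rightarrow> quat set \<Rightarrow> real \<Rightarrow> real" where
  "max_mod f \<Omega> r = Sup ((\<lambda>q. norm (f q)) ` {q \<in> closure \<Omega>. norm q = r})"

definition slice_order :: "(quat \<Rightarrow> quat) \<Rightarrow> quat set \<Rightarrow> ereal" where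
  "slice_order f \<Omega> = Limsup at_top (\<lambda>r. ereal (lnp (lnp (max_mod f \<Omega> r)) / ln r))"

end

theory Submission
  imports Defs "HOL-Complex_Analysis.Conformal_Mappings" "HOL-Real_Asymp.Real_Asymp"
begin

(* The proof reduces the quaternionic statement to the classical complex one.
   1. Complex part.  For the open sector  sector A = {z. |arg z| < A}  with 0 < A < pi we prove
      the Phragmen-Lindeloef theorem: a function H, holomorphic on the sector, continuous up to
      its boundary, bounded by M on the boundary rays and of growth  |H z| <= C exp(|z|^gamma)
      with gamma < beta < pi/(2A), is bounded by M in the sector.  The classical argument damps H
      by  exp(-eps z^beta)  and applies the maximum modulus principle of the library on truncated
      sectors, then lets eps tend to 0.
   2. Quaternionic part.  For an imaginary unit I the map  iota I : x + iy |-> x + yI  identifies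
      the plane with the slice L_I; it maps sector (phi/2) onto the slice of the cone C(phi).
      For a fixed quaternion c, the L_I-component of  f(iota I z) * c  is holomorphic in z by the
      Cauchy-Riemann equation defining slice regularity, and a finite order below alpha gives the
      growth bound required in part 1.
   3. Choosing c = conj (f q0) turns the bound of part 1 at the point q0 into  |f q0|^2 <= M |f q0|. *)


section \<open>Sectors in the complex plane\<close>

text \<open>The open sector of half-opening A around the positive real axis, and its closed version.\<close>
definition sector :: "real \<Rightarrow> complex set" where
  "sector A = {z. norm z * cos A < Re z}"

definition csector :: "real \<Rightarrow> complex set" where
  "csector A = {z. norm z * cos A \<le> Re z}"

lemma open_sector: "open (sector A)"
  unfolding sector_def by (intro open_Collect_less continuous_intros)

lemma closure_sector: "closure (sector A) \<subseteq> csector A"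
proof (rule closure_minimal)
  show "sector A \<subseteq> csector A" by (auto simp: sector_def csector_def)
  show "closed (csector A)" unfolding csector_def by (intro closed_Collect_le continuous_intros)
qed

lemma Re_eq_norm_cos_Ln: "z \<noteq> 0 \<Longrightarrow> Re z = norm z * cos (Im (Ln z))"
  by (metis Re_exp exp_Ln norm_exp_eq_Re)

lemma Im_eq_norm_sin_Ln: "z \<noteq> 0 \<Longrightarrow> Im z = norm z * sin (Im (Ln z))"
  by (metis Im_exp exp_Ln norm_exp_eq_Re)

lemma csector_arg:
  assumes A: "0 < A" "A < pi" and z: "z \<noteq> 0" "z \<in> csector A"
  shows "\<bar>Im (Ln z)\<bar> \<le> A"
proof -
  define \<theta> where "\<theta> = Im (Ln z)"
  have "norm z * cos A \<le> norm z * cos \<theta>"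
    using z Re_eq_norm_cos_Ln[OF z(1)] by (simp add: csector_def \<theta>_def)
  then have "cos A \<le> cos \<bar>\<theta>\<bar>" using z by (simp add: mult_le_cancel_left_pos)
  moreover have "\<bar>\<theta>\<bar> \<le> pi" using mpi_less_Im_Ln[of z] Im_Ln_le_pi[of z] z by (auto simp: \<theta>_def)
  ultimately show ?thesis using cos_mono_le_eq[of A "\<bar>\<theta>\<bar>"] A by (simp add: \<theta>_def)
qed

text \<open>The closed sector avoids the branch cut of the principal power.\<close>
lemma csector_not_nonpos:
  assumes A: "0 < A" "A < pi" and z: "z \<in> csector A" "z \<noteq> 0"
  shows "z \<notin> \<real>\<^sub>\<le>\<^sub>0"
proof
  assume "z \<in> \<real>\<^sub>\<le>\<^sub>0"
  then obtain x where x: "z = of_real x" "x < 0" using z(2) by (auto simp: nonpos_Reals_def)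
  have "cos A > -1" using cos_monotone_0_pi[of A pi] A by simp
  then have "x * (1 + cos A) < 0" using x(2) by (intro mult_neg_pos) auto
  moreover have "- x * cos A \<le> x" using z x by (simp add: csector_def)
  ultimately show False by (simp add: algebra_simps)
qed

lemma Re_powr_real:
  assumes "z \<noteq> 0"
  shows "Re (z powr complex_of_real b) = norm z powr b * cos (b * Im (Ln z))"
proof -
  have "Re (z powr complex_of_real b) = exp (b * ln (norm z)) * cos (b * Im (Ln z))"
    using assms by (simp add: powr_def Re_exp)
  also have "exp (b * ln (norm z)) = norm z powr b" using assms by (simp add: powr_def)
  finally show ?thesis .
qed

lemma Re_powr_lower_bound:
  assumes A: "0 < A" "A < pi" and b: "0 \<le> b" "b * A \<le> pi" and z: "z \<in> csector A"
  shows "norm z powr b * cos (b * A) \<le> Re (z powr complex_of_real b)"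
proof (cases "z = 0")
  case False
  have "\<bar>b * Im (Ln z)\<bar> \<le> b * A"
    using csector_arg[OF A False z] b by (simp add: abs_mult mult_left_mono)
  then have "cos (b * A) \<le> cos \<bar>b * Im (Ln z)\<bar>" using b A by (subst cos_mono_le_eq) auto
  then have "cos (b * A) \<le> cos (b * Im (Ln z))" by simp
  then show ?thesis using False by (simp add: Re_powr_real mult_left_mono)
qed simp


definition damping :: "real \<Rightarrow> real \<Rightarrow> complex \<Rightarrow> complex" where
  "damping \<epsilon> \<beta> z = exp (- complex_of_real \<epsilon> * z powr complex_of_real \<beta>)"

lemma damping_holomorphic:
  assumes A: "0 < A" "A < pi"
  shows "damping \<epsilon> \<beta> holomorphic_on sector A"
proof -
  have "z \<notin> \<real>\<^sub>\<le>\<^sub>0" if "z \<in> sector A" for z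
  proof (rule csector_not_nonpos[OF A])
    show "z \<in> csector A" "z \<noteq> 0" using that by (auto simp: sector_def csector_def)
  qed
  then show ?thesis unfolding damping_def[abs_def] by (intro holomorphic_intros) auto
qed

lemma damping_continuous:
  assumes A: "0 < A" "A < pi" and \<beta>: "\<beta> > 0"
  shows "continuous_on (csector A) (damping \<epsilon> \<beta>)"
proof -
  have "csector A \<subseteq> {z. Re z \<ge> 0 \<or> Im z \<noteq> 0}"
  proof
    fix z assume z: "z \<in> csector A"
    show "z \<in> {z. Re z \<ge> 0 \<or> Im z \<noteq> 0}"
    proof (cases "z = 0")
      case False
      then show ?thesis using csector_not_nonpos[OF A z]
        by (auto simp: nonpos_Reals_def complex_is_Real_iff complex_eq_iff)
    qed simp
  qed
  then show ?thesis
    unfolding damping_def[abs_def] using \<beta> by (intro continuous_intros) auto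
qed

lemma norm_damping_upper:
  assumes A: "0 < A" "A < pi" and \<beta>: "0 \<le> \<beta>" "\<beta> * A \<le> pi" and \<epsilon>: "\<epsilon> \<ge> 0"
    and z: "z \<in> csector A"
  shows "norm (damping \<epsilon> \<beta> z) \<le> exp (- (\<epsilon> * cos (\<beta> * A)) * norm z powr \<beta>)"
  using mult_left_mono[OF Re_powr_lower_bound[OF A \<beta> z] \<epsilon>]
  by (simp add: damping_def norm_exp_eq_Re mult_ac)

lemma norm_damping_lower:
  assumes "\<epsilon> \<ge> 0"
  shows "exp (- \<epsilon> * norm z powr \<beta>) \<le> norm (damping \<epsilon> \<beta> z)"
proof -
  have "Re (z powr complex_of_real \<beta>) \<le> norm z powr \<beta>"
    using complex_Re_le_cmod[of "z powr complex_of_real \<beta>"] by (simp add: norm_powr_real_powr')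
  then show ?thesis using assms by (simp add: damping_def norm_exp_eq_Re mult_left_mono)
qed


section \<open>Phragmen-Lindeloef in a sector\<close>

lemma exp_growth_dominated:
  fixes \<gamma> \<beta> \<kappa> C :: real
  assumes "0 < \<gamma>" "\<gamma> < \<beta>" "\<kappa> > 0"
  shows "((\<lambda>R. C * exp (R powr \<gamma>) * exp (- \<kappa> * R powr \<beta>)) \<longlongrightarrow> 0) at_top"
proof -
  define \<delta> where "\<delta> = \<beta> - \<gamma>"
  have "\<delta> > 0" "\<beta> = \<gamma> + \<delta>" using assms by (auto simp: \<delta>_def)
  have "((\<lambda>R. C * exp (R powr \<gamma> - \<kappa> * R powr (\<gamma> + \<delta>))) \<longlongrightarrow> 0) at_top"
    using assms \<open>\<delta> > 0\<close> by real_asymp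
  then show ?thesis using \<open>\<beta> = \<gamma> + \<delta>\<close> by (simp add: mult.assoc exp_add[symmetric])
qed

text \<open>On the boundary of the sector truncated at radius R, the damped function is bounded by M' as
  soon as the damping beats the growth on the arc |z| = R: on the rays H is bounded by M and the
  damping factor by 1.\<close>
lemma damped_truncated_boundary:
  fixes H :: "complex \<Rightarrow> complex"
  assumes A: "0 < A" "A < pi" and \<beta>: "0 \<le> \<beta>" "\<beta> * A \<le> pi/2" and \<epsilon>: "\<epsilon> \<ge> 0"
    and rays: "\<And>z. z \<in> closure (sector A) \<Longrightarrow> z \<notin> sector A \<Longrightarrow> norm (H z) \<le> M"
    and growth: "\<And>z. z \<in> closure (sector A) \<Longrightarrow> norm z \<ge> R0 \<Longrightarrow> norm (H z) \<le> C * exp (norm z powr \<gamma>)"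
    and M: "M \<le> M'" and R: "R \<ge> R0"
    and arc: "C * exp (R powr \<gamma>) * exp (- (\<epsilon> * cos (\<beta> * A)) * R powr \<beta>) \<le> M'"
    and z: "z \<in> closure (sector A)" "z \<notin> sector A \<or> norm z = R"
  shows "norm (H z * damping \<epsilon> \<beta> z) \<le> M'"
proof -
  have zcs: "z \<in> csector A" using z closure_sector by blast
  have \<beta>A: "0 \<le> \<beta>" "\<beta> * A \<le> pi" using \<beta> pi_gt_zero by linarith+
  have "\<beta> * A \<ge> 0" using \<beta> A by simp
  then have "cos (\<beta> * A) \<ge> 0" using \<beta> by (intro cos_ge_zero) auto
  then have "exp (- (\<epsilon> * cos (\<beta> * A)) * norm z powr \<beta>) \<le> 1" using \<epsilon> by simp
  then have E_le_1: "norm (damping \<epsilon> \<beta> z) \<le> 1"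
    using norm_damping_upper[OF A \<beta>A \<epsilon> zcs] by linarith
  show ?thesis
  proof (cases "z \<in> sector A")
    case False
    have "norm (H z * damping \<epsilon> \<beta> z) \<le> M * 1"
      unfolding norm_mult using rays[OF z(1) False] E_le_1
      by (intro mult_mono) (auto intro: order_trans[OF norm_ge_zero])
    then show ?thesis using M by simp
  next
    case True
    then have nz: "norm z = R" using z by auto
    have "norm (H z * damping \<epsilon> \<beta> z) \<le> C * exp (R powr \<gamma>) * exp (- (\<epsilon> * cos (\<beta> * A)) * R powr \<beta>)"
      unfolding norm_mult using growth[OF z(1)] norm_damping_upper[OF A \<beta>A \<epsilon> zcs] nz R
      by (intro mult_mono) (auto intro: order_trans[OF norm_ge_zero])
    then show ?thesis using arc by simp
  qed
qed

text \<open>The damped function is bounded by any M' > M: apply the maximum modulus principle on the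
  sector truncated at a radius R so large that the damping beats the growth on the arc |z| = R.\<close>
lemma phragmen_lindelof_damped:
  fixes H :: "complex \<Rightarrow> complex"
  assumes A: "0 < A" "A < pi"
    and \<beta>: "0 < \<gamma>" "\<gamma> < \<beta>" "\<beta> * A < pi/2"
    and hol: "H holomorphic_on sector A"
    and cont: "continuous_on (closure (sector A)) H"
    and rays: "\<And>z. z \<in> closure (sector A) \<Longrightarrow> z \<notin> sector A \<Longrightarrow> norm (H z) \<le> M"
    and growth: "\<And>z. z \<in> closure (sector A) \<Longrightarrow> norm z \<ge> R0 \<Longrightarrow> norm (H z) \<le> C * exp (norm z powr \<gamma>)"
    and M: "0 \<le> M" "M < M'" and \<epsilon>: "\<epsilon> > 0"
    and z0: "z0 \<in> sector A"
  shows "norm (H z0 * damping \<epsilon> \<beta> z0) \<le> M'"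
proof -
  define c where "c = cos (\<beta> * A)"
  have "\<beta> * A > 0" using \<beta> A by simp
  then have c: "c > 0" unfolding c_def using \<beta> by (intro cos_gt_zero_pi) linarith+
  have \<beta>A: "0 \<le> \<beta>" "\<beta> * A \<le> pi/2" using \<beta> by linarith+
  have "eventually (\<lambda>R. C * exp (R powr \<gamma>) * exp (- (\<epsilon> * c) * R powr \<beta>) < M') at_top"
    by (rule order_tendstoD(2)[OF exp_growth_dominated[OF \<beta>(1,2)]]) (use \<epsilon> c M in auto)
  moreover have "eventually (\<lambda>R. R \<ge> max R0 (norm z0 + 1)) at_top" by (rule eventually_ge_at_top)
  ultimately have "eventually (\<lambda>R. C * exp (R powr \<gamma>) * exp (- (\<epsilon> * c) * R powr \<beta>) < M'
      \<and> R \<ge> max R0 (norm z0 + 1)) at_top"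
    by (rule eventually_conj)
  then obtain R where arc: "C * exp (R powr \<gamma>) * exp (- (\<epsilon> * c) * R powr \<beta>) < M'"
    and R: "R \<ge> max R0 (norm z0 + 1)"
    using eventually_happens'[OF trivial_limit_at_top_linorder] by blast
  define U where "U = sector A \<inter> ball 0 R"
  have oU: "open U" by (simp add: U_def open_sector open_Int)
  have clU: "closure U \<subseteq> closure (sector A) \<inter> cball 0 R"
    by (rule closure_minimal) (auto simp: U_def intro: closure_subset[THEN subsetD])
  show ?thesis
  proof (rule maximum_modulus_frontier[where f="\<lambda>z. H z * damping \<epsilon> \<beta> z" and S=U])
    show "(\<lambda>z. H z * damping \<epsilon> \<beta> z) holomorphic_on interior U"
      unfolding interior_open[OF oU] unfolding U_def
      by (intro holomorphic_intros holomorphic_on_subset[OF hol]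
          holomorphic_on_subset[OF damping_holomorphic[OF A]]) auto
    show "continuous_on (closure U) (\<lambda>z. H z * damping \<epsilon> \<beta> z)"
      using clU closure_sector \<beta>(1,2)
      by (intro continuous_intros continuous_on_subset[OF cont]
          continuous_on_subset[OF damping_continuous[OF A]]) auto
    show "bounded U" by (simp add: U_def bounded_Int)
    show "z0 \<in> U" using z0 R by (simp add: U_def)
  next
    fix z assume "z \<in> frontier U"
    then have "z \<in> closure U" "z \<notin> U" by (auto simp: frontier_def interior_open[OF oU])
    then have "z \<in> closure (sector A)" "z \<notin> sector A \<or> norm z = R" using clU by (auto simp: U_def)
    then show "norm (H z * damping \<epsilon> \<beta> z) \<le> M'"
      by (intro damped_truncated_boundary[where R=R, OF A \<beta>A _ rays growth])
        (use \<epsilon> M R arc in \<open>auto simp: c_def\<close>)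
  qed
qed

text \<open>Phragmen-Lindeloef principle for the sector of half-opening A: letting eps tend to 0 and
  M' decrease to M in the damped estimate.\<close>
theorem phragmen_lindelof_sector:
  fixes H :: "complex \<Rightarrow> complex"
  assumes A: "0 < A" "A < pi"
    and \<beta>: "0 < \<gamma>" "\<gamma> < \<beta>" "\<beta> * A < pi/2"
    and hol: "H holomorphic_on sector A"
    and cont: "continuous_on (closure (sector A)) H"
    and rays: "\<And>z. z \<in> closure (sector A) \<Longrightarrow> z \<notin> sector A \<Longrightarrow> norm (H z) \<le> M"
    and growth: "\<And>z. z \<in> closure (sector A) \<Longrightarrow> norm z \<ge> R0 \<Longrightarrow> norm (H z) \<le> C * exp (norm z powr \<gamma>)"
    and M: "0 \<le> M" and z0: "z0 \<in> sector A"
  shows "norm (H z0) \<le> M"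
proof (rule dense_ge)
  fix M' assume M': "M < M'"
  define K where "K = norm z0 powr \<beta>"
  have bound: "norm (H z0) \<le> M' * exp (\<epsilon> * K)" if \<epsilon>: "\<epsilon> > 0" for \<epsilon>
  proof -
    have "norm (H z0) * exp (- \<epsilon> * K) \<le> norm (H z0 * damping \<epsilon> \<beta> z0)"
      unfolding norm_mult K_def using norm_damping_lower[of \<epsilon> z0 \<beta>] \<epsilon> by (intro mult_left_mono) auto
    also have "\<dots> \<le> M'"
      by (rule phragmen_lindelof_damped[OF A \<beta> hol cont rays growth M M' \<epsilon> z0])
    finally show ?thesis by (simp add: exp_minus field_simps)
  qed
  then have "eventually (\<lambda>\<epsilon>. norm (H z0) \<le> M' * exp (\<epsilon> * K)) (at_right 0)"
    by (auto intro: eventually_mono[OF eventually_at_right_less])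
  moreover have "((\<lambda>\<epsilon>. M' * exp (\<epsilon> * K)) \<longlongrightarrow> M' * exp (0 * K)) (at_right 0)"
    by (intro tendsto_intros tendsto_ident_at)
  ultimately show "norm (H z0) \<le> M'"
    by (intro tendsto_lowerbound[of _ _ "at_right (0::real)"]) auto
qed


section \<open>Quaternion algebra\<close>

lemma qnorm2: "(norm (q::quat))^2 = (fst q)^2 + (fst (snd q))^2 + (fst (snd (snd q)))^2 + (snd (snd (snd q)))^2"
  by (cases q) (simp add: norm_Pair)

lemma qmult_norm: "norm (p \<star> q) = norm p * norm q"
proof -
  obtain a b c d where p: "p = (a,b,c,d)" by (cases p) auto
  obtain e f g h where q: "q = (e,f,g,h)" by (cases q) auto
  have "(norm (p \<star> q))^2 = (norm p * norm q)^2"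
    unfolding power_mult_distrib qnorm2 p q by simp algebra
  then show ?thesis by (simp add: power2_eq_iff_nonneg)
qed

lemma qmult_assoc: "(p \<star> q) \<star> r = p \<star> (q \<star> r)"
  by (cases p, cases q, cases r) (simp add: algebra_simps)

lemma qmult_add_left: "(p + q) \<star> r = p \<star> r + q \<star> r"
  by (cases p, cases q, cases r) (simp add: algebra_simps)

lemma qmult_scaleR_left: "(t *\<^sub>R p) \<star> r = t *\<^sub>R (p \<star> r)"
  by (cases p, cases r) (simp add: algebra_simps)

lemma qmult_minus_right: "r \<star> (- p) = - (r \<star> p)"
  by (cases p, cases r) (simp add: algebra_simps)

lemma bounded_linear_qmult_right: "bounded_linear (\<lambda>q. q \<star> c)"
  by (rule bounded_linear_intro[where K="norm c"]) (simp_all add: qmult_add_left qmult_scaleR_left qmult_norm)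

lemma imag_unit_square:
  assumes "I \<in> imag_units"
  shows "I \<star> (I \<star> v) = - v"
proof -
  obtain x1 x2 x3 where I: "I = (0,x1,x2,x3)" and n: "x1^2 + x2^2 + x3^2 = 1"
    using assms by (auto simp: imag_units_def)
  obtain a b c d where v: "v = (a,b,c,d)" by (cases v) auto
  have "I \<star> (I \<star> v) = (- (a * (x1^2 + x2^2 + x3^2)), - (b * (x1^2 + x2^2 + x3^2)),
      - (c * (x1^2 + x2^2 + x3^2)), - (d * (x1^2 + x2^2 + x3^2)))"
    unfolding I v by simp algebra
  then show ?thesis using n v by simp
qed

definition qconj :: "quat \<Rightarrow> quat" where
  "qconj q = (fst q, - fst (snd q), - fst (snd (snd q)), - snd (snd (snd q)))"

lemma qconj_norm: "norm (qconj w) = norm w"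
  by (cases w) (simp add: qconj_def norm_Pair)

text \<open>The component of a quaternion in the slice L_I, read as a complex number: the real part and
  the coefficient of the projection of the imaginary part onto I.\<close>
definition qcomp :: "quat \<Rightarrow> quat \<Rightarrow> complex" where
  "qcomp I q = Complex (fst q) (fst (snd I) * fst (snd q) + fst (snd (snd I)) * fst (snd (snd q))
                                + snd (snd (snd I)) * snd (snd (snd q)))"

lemma qcomp_imag_unit:
  assumes "I \<in> imag_units"
  shows "qcomp I (I \<star> v) = \<i> * qcomp I v"
proof -
  obtain x1 x2 x3 where I: "I = (0,x1,x2,x3)" and n: "x1^2 + x2^2 + x3^2 = 1"
    using assms by (auto simp: imag_units_def)
  obtain a b c d where v: "v = (a,b,c,d)" by (cases v) auto
  have "x1 * (x1 * a + x2 * d - x3 * c) + x2 * (x2 * a - x1 * d + x3 * b) + x3 * (x3 * a + x1 * c - x2 * b)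
      = a * (x1^2 + x2^2 + x3^2)"
    by algebra
  also have "\<dots> = a" using n by simp
  finally show ?thesis unfolding I v qcomp_def by (simp add: complex_eq_iff algebra_simps)
qed

text \<open>Projecting onto a slice does not increase the norm (Cauchy-Schwarz in R^3).\<close>
lemma qcomp_norm:
  assumes "I \<in> imag_units"
  shows "norm (qcomp I v) \<le> norm v"
proof -
  obtain x1 x2 x3 where I: "I = (0,x1,x2,x3)" and n: "x1^2 + x2^2 + x3^2 = 1"
    using assms by (auto simp: imag_units_def)
  obtain a b c d where v: "v = (a,b,c,d)" by (cases v) auto
  have "(x1^2 + x2^2 + x3^2) * (b^2 + c^2 + d^2) - (x1 * b + x2 * c + x3 * d)^2
     = (x1*c - x2*b)^2 + (x1*d - x3*b)^2 + (x2*d - x3*c)^2" by algebra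
  moreover have "(x1*c - x2*b)^2 + (x1*d - x3*b)^2 + (x2*d - x3*c)^2 \<ge> 0" by simp
  ultimately have "(x1 * b + x2 * c + x3 * d)^2 \<le> (x1^2 + x2^2 + x3^2) * (b^2 + c^2 + d^2)"
    by linarith
  then have "(norm (qcomp I v))^2 \<le> (norm v)^2"
    unfolding qnorm2 I v qcomp_def using n by (simp add: cmod_power2)
  then show ?thesis by (simp add: power2_le_iff_abs_le)
qed

lemma bounded_linear_qcomp:
  assumes "I \<in> imag_units"
  shows "bounded_linear (qcomp I)"
proof (rule bounded_linear_intro[where K=1])
  fix x y show "qcomp I (x + y) = qcomp I x + qcomp I y"
    by (cases x, cases y) (simp add: qcomp_def complex_eq_iff algebra_simps)
  fix r x show "qcomp I (r *\<^sub>R x) = r *\<^sub>R qcomp I x"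
    by (cases x) (simp add: qcomp_def complex_eq_iff algebra_simps)
  fix x show "norm (qcomp I x) \<le> norm x * 1" using qcomp_norm[OF assms] by simp
qed

text \<open>w times its conjugate is the real number |w|^2, so this is also its L_I-component.\<close>
lemma qcomp_mult_qconj: "qcomp I (w \<star> qconj w) = complex_of_real ((norm w)^2)"
proof -
  obtain a b c d where w: "w = (a,b,c,d)" by (cases w) auto
  have nw: "(norm w)^2 = a^2 + b^2 + c^2 + d^2" using qnorm2[of w] by (simp add: w)
  show ?thesis unfolding nw by (simp add: w qcomp_def qconj_def complex_eq_iff power2_eq_square)
qed

text \<open>The Cauchy-Riemann equation of slice regularity,  D(1,0) + I D(0,1) = 0,  makes the
  L_I-component of  D(h) c  complex linear in h.\<close>
lemma qcomp_CR_linear: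
  assumes I: "I \<in> imag_units" and D: "bounded_linear D" and CR: "D (1, 0) + I \<star> D (0, 1) = 0"
  shows "qcomp I (D (Re h, Im h) \<star> c) = qcomp I (D (1, 0) \<star> c) * h"
proof -
  define a where "a = qcomp I (D (1, 0) \<star> c)"
  have lin: "linear D" "linear (qcomp I)"
    using D bounded_linear_qcomp[OF I] by (auto intro: bounded_linear.linear)
  have "D (1, 0) = - (I \<star> D (0, 1))" using CR by (simp add: eq_neg_iff_add_eq_0)
  then have D01: "D (0, 1) = I \<star> D (1, 0)"
    using imag_unit_square[OF I] by (simp add: qmult_minus_right)
  have "D (Re h, Im h) = D (Re h *\<^sub>R (1, 0) + Im h *\<^sub>R (0, 1))" by simp
  also have "\<dots> = Re h *\<^sub>R D (1, 0) + Im h *\<^sub>R D (0, 1)"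
    by (simp only: linear_add[OF lin(1)] linear_scale[OF lin(1)])
  finally have "qcomp I (D (Re h, Im h) \<star> c) = Re h *\<^sub>R a + Im h *\<^sub>R qcomp I (I \<star> (D (1, 0) \<star> c))"
    by (simp add: a_def D01 qmult_assoc qmult_add_left qmult_scaleR_left linear_add[OF lin(2)] linear_scale[OF lin(2)])
  also have "\<dots> = a * h"
    unfolding qcomp_imag_unit[OF I] a_def[symmetric] by (simp add: complex_eq_iff algebra_simps)
  finally show ?thesis by (simp add: a_def)
qed


section \<open>The slices of the circular cone\<close>

definition iota :: "quat \<Rightarrow> complex \<Rightarrow> quat" where
  "iota I z = slice_pt I (Re z) (Im z)"

lemma iota_components:
  "I = (0, x1, x2, x3) \<Longrightarrow> iota I z = (Re z, Im z * x1, Im z * x2, Im z * x3)"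
  by (simp add: iota_def slice_pt_def qreal_def)

lemma norm_iota:
  assumes "I \<in> imag_units"
  shows "norm (iota I z) = norm z"
proof -
  obtain x1 x2 x3 where I: "I = (0,x1,x2,x3)" and n: "x1^2 + x2^2 + x3^2 = 1"
    using assms by (auto simp: imag_units_def)
  have "(norm (iota I z))^2 = (Re z)^2 + (Im z)^2 * (x1^2 + x2^2 + x3^2)"
    unfolding qnorm2 iota_components[OF I] by (simp add: power_mult_distrib algebra_simps)
  also have "\<dots> = (norm z)^2" using n by (simp add: cmod_power2)
  finally show ?thesis by (simp add: power2_eq_iff_nonneg)
qed

lemma continuous_iota: "continuous_on S (iota I)"
  unfolding iota_def slice_pt_def qreal_def by (intro continuous_intros)

lemma iota_polar: "iota I (complex_of_real r * cis \<theta>) = r *\<^sub>R qexpI I \<theta>"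
  by (simp add: iota_def qexpI_def slice_pt_def qreal_def scaleR_add_right)

lemma iota_in_cone_iff:
  assumes \<phi>: "0 < \<phi>" "\<phi> < 2 * pi" and I: "I \<in> imag_units"
  shows "iota I z \<in> circ_cone \<phi> \<longleftrightarrow> z \<in> sector (\<phi>/2)"
proof
  assume "iota I z \<in> circ_cone \<phi>"
  then obtain \<rho> J t where eq: "iota I z = \<rho> *\<^sub>R qexpI J t" and \<rho>: "\<rho> > 0"
      and t: "\<bar>t\<bar> < \<phi>/2" and J: "J \<in> imag_units"
    unfolding circ_cone_def by blast
  obtain x1 x2 x3 where Ie: "I = (0,x1,x2,x3)" and n: "x1^2 + x2^2 + x3^2 = 1"
    using I by (auto simp: imag_units_def)
  obtain y1 y2 y3 where Je: "J = (0,y1,y2,y3)" and m: "y1^2 + y2^2 + y3^2 = 1"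
    using J by (auto simp: imag_units_def)
  from eq have c: "Re z = \<rho> * cos t" "Im z * x1 = \<rho> * sin t * y1"
      "Im z * x2 = \<rho> * sin t * y2" "Im z * x3 = \<rho> * sin t * y3"
    by (simp_all add: iota_components[OF Ie] qexpI_def slice_pt_def qreal_def Je)
  have "(Im z)^2 = (Im z * x1)^2 + (Im z * x2)^2 + (Im z * x3)^2"
    using n by algebra
  also have "\<dots> = (\<rho> * sin t)^2" unfolding c using m by algebra
  finally have "(norm z)^2 = \<rho>^2"
    using c(1) by (simp add: cmod_power2 power_mult_distrib algebra_simps sin_squared_eq)
  then have nz: "norm z = \<rho>" using \<rho> by (simp add: power2_eq_iff_nonneg)
  have "cos (\<phi>/2) < cos \<bar>t\<bar>" using t \<phi> by (intro cos_monotone_0_pi) auto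
  then have "\<rho> * cos (\<phi>/2) < \<rho> * cos t" using \<rho> by simp
  then show "z \<in> sector (\<phi>/2)" unfolding sector_def using nz c(1) by simp
next
  assume z: "z \<in> sector (\<phi>/2)"
  then have z0: "z \<noteq> 0" by (auto simp: sector_def)
  define \<theta> where "\<theta> = Im (Ln z)"
  have "norm z * cos (\<phi>/2) < norm z * cos \<theta>"
    using z Re_eq_norm_cos_Ln[OF z0] by (simp add: sector_def \<theta>_def)
  then have "cos (\<phi>/2) < cos \<bar>\<theta>\<bar>" using z0 by (simp add: mult_less_cancel_left_pos)
  moreover have "\<bar>\<theta>\<bar> \<le> pi" using mpi_less_Im_Ln[of z] Im_Ln_le_pi[of z] z0 by (auto simp: \<theta>_def)
  ultimately have "\<bar>\<theta>\<bar> < \<phi>/2" using cos_mono_less_eq[of "\<phi>/2" "\<bar>\<theta>\<bar>"] \<phi> by simp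
  moreover have "iota I z = norm z *\<^sub>R qexpI I \<theta>"
    using Re_eq_norm_cos_Ln[OF z0] Im_eq_norm_sin_Ln[OF z0]
    by (simp add: iota_def qexpI_def slice_pt_def qreal_def \<theta>_def scaleR_add_right)
  moreover have "norm z > 0" using z0 by simp
  ultimately show "iota I z \<in> circ_cone \<phi>" unfolding circ_cone_def using I by blast
qed


definition slice_fun :: "(quat \<Rightarrow> quat) \<Rightarrow> quat \<Rightarrow> quat \<Rightarrow> complex \<Rightarrow> complex" where
  "slice_fun f I c z = qcomp I (f (iota I z) \<star> c)"

lemma norm_slice_fun:
  assumes "I \<in> imag_units"
  shows "norm (slice_fun f I c z) \<le> norm (f (iota I z)) * norm c"
  unfolding slice_fun_def using qcomp_norm[OF assms, of "f (iota I z) \<star> c"] by (simp add: qmult_norm)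

lemma slice_fun_holomorphic:
  assumes reg: "slice_regular f \<Omega>" and I: "I \<in> imag_units"
    and S: "open S" "iota I ` S \<subseteq> \<Omega>"
  shows "slice_fun f I c holomorphic_on S"
  unfolding holomorphic_on_open[OF S(1)]
proof
  fix z assume z: "z \<in> S"
  define F where "F = (\<lambda>(s, t). f (slice_pt I s t))"
  have "slice_pt I (Re z) (Im z) \<in> \<Omega>" using S z by (auto simp: iota_def)
  then obtain D where D: "(F has_derivative D) (at (Re z, Im z))"
      and CR: "D (1, 0) + I \<star> D (0, 1) = 0"
    using reg I unfolding slice_regular_def F_def by fastforce
  have "bounded_linear (\<lambda>h::complex. (Re h, Im h))"
    by (intro bounded_linear_Pair bounded_linear_Re bounded_linear_Im)
  from diff_chain_at[OF bounded_linear_imp_has_derivative[OF this] D]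
  have "((\<lambda>z. F (Re z, Im z)) has_derivative (\<lambda>h. D (Re h, Im h))) (at z)"
    by (simp add: o_def)
  from bounded_linear.has_derivative[OF bounded_linear_qcomp[OF I]
        bounded_linear.has_derivative[OF bounded_linear_qmult_right[of c] this]]
  have "((\<lambda>z. qcomp I (F (Re z, Im z) \<star> c)) has_derivative (\<lambda>h. qcomp I (D (Re h, Im h) \<star> c))) (at z)" .
  also have "(\<lambda>z. qcomp I (F (Re z, Im z) \<star> c)) = slice_fun f I c"
    by (simp add: fun_eq_iff slice_fun_def F_def iota_def)
  also have "(\<lambda>h. qcomp I (D (Re h, Im h) \<star> c)) = (*) (qcomp I (D (1, 0) \<star> c))"
    using qcomp_CR_linear[OF I has_derivative_bounded_linear[OF D] CR] by (auto simp: mult.commute)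
  finally show "\<exists>f'. (slice_fun f I c has_field_derivative f') (at z)"
    by (auto simp: has_field_derivative_def)
qed

text \<open>M_f(r) bounds |f| on the sphere of radius r; the supremum is finite because the closure of
  the domain meets every sphere in a compact set.\<close>
lemma max_mod_upper:
  assumes cont: "continuous_on (closure \<Omega>) f" and q: "q \<in> closure \<Omega>"
  shows "norm (f q) \<le> max_mod f \<Omega> (norm q)"
proof -
  define K where "K = {p \<in> closure \<Omega>. norm p = norm q}"
  have "K = closure \<Omega> \<inter> sphere 0 (norm q)" by (auto simp: K_def)
  then have "compact K" by (simp add: closed_Int_compact)
  moreover have "continuous_on K (\<lambda>p. norm (f p))"
    by (intro continuous_on_norm continuous_on_subset[OF cont]) (auto simp: K_def)
  ultimately have bdd: "bdd_above ((\<lambda>p. norm (f p)) ` K)"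
    by (intro bounded_imp_bdd_above compact_imp_bounded compact_continuous_image)
  show ?thesis
    unfolding max_mod_def K_def[symmetric] by (rule cSUP_upper[OF _ bdd]) (use q in \<open>simp add: K_def\<close>)
qed

lemma max_mod_growth:
  assumes ord: "slice_order f \<Omega> < ereal \<gamma>" and \<gamma>: "\<gamma> > 0"
  obtains R0 where "\<And>r. r \<ge> R0 \<Longrightarrow> max_mod f \<Omega> r \<le> exp (r powr \<gamma>)"
proof -
  define Mf where "Mf = max_mod f \<Omega>"
  have "eventually (\<lambda>r. ereal (lnp (lnp (Mf r)) / ln r) < ereal \<gamma>) at_top"
    using ord unfolding slice_order_def Mf_def by (rule Limsup_lessD)
  then obtain N where N: "\<And>r. r \<ge> N \<Longrightarrow> lnp (lnp (Mf r)) / ln r < \<gamma>"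
    unfolding eventually_at_top_linorder by auto
  have "Mf r \<le> exp (r powr \<gamma>)" if r: "r \<ge> max N 2" for r
  proof (cases "Mf r \<le> exp 1")
    case True
    have "1 \<le> r powr \<gamma>" using r \<gamma> by (intro ge_one_powr_ge_zero) auto
    then have "exp 1 \<le> exp (r powr \<gamma>)" by simp
    then show ?thesis using True by linarith
  next
    case False
    then have big: "exp 1 < Mf r" by simp
    have "(1::real) < exp 1" by simp
    then have M1: "1 < Mf r" using big by linarith
    have lnM: "1 < ln (Mf r)" using ln_less_cancel_iff[of "exp 1" "Mf r"] big M1 by simp
    have "lnp (lnp (Mf r)) = ln (ln (Mf r))" using M1 lnM by (simp add: lnp_def)
    moreover have "ln r > 0" using r by simp
    ultimately have "ln (ln (Mf r)) < \<gamma> * ln r" using N[of r] r by (simp add: divide_less_eq)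
    then have "exp (ln (ln (Mf r))) < exp (\<gamma> * ln r)" by simp
    then have "ln (Mf r) < r powr \<gamma>" using lnM r by (simp add: powr_def mult.commute)
    then have "exp (ln (Mf r)) < exp (r powr \<gamma>)" by simp
    then show ?thesis using M1 by simp
  qed
  then show ?thesis using that unfolding Mf_def by blast
qed


lemma cone_angle_bounds:
  assumes "\<alpha> > 1/2"
  shows "0 < pi / \<alpha>" "pi / \<alpha> < 2 * pi"
  using assms by (simp_all add: divide_less_eq)

lemma exponents_between:
  fixes \<rho> :: ereal
  assumes "\<rho> < ereal \<alpha>" "\<alpha> > 0"
  obtains \<gamma> \<beta> where "\<rho> < ereal \<gamma>" "0 < \<gamma>" "\<gamma> < \<beta>" "\<beta> < \<alpha>"
proof -
  obtain \<gamma>0 where \<gamma>0: "\<rho> < ereal \<gamma>0" "\<gamma>0 < \<alpha>" using ereal_dense2[OF assms(1)] by auto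
  define \<gamma> where "\<gamma> = max \<gamma>0 (\<alpha>/2)"
  have "\<rho> < ereal \<gamma>" using \<gamma>0(1) by (rule order_less_le_trans) (simp add: \<gamma>_def)
  moreover have "0 < \<gamma>" "\<gamma> < (\<gamma> + \<alpha>) / 2" "(\<gamma> + \<alpha>) / 2 < \<alpha>"
    using \<gamma>0 assms(2) by (auto simp: \<gamma>_def)
  ultimately show ?thesis using that by blast
qed

lemma slice_phragmen_lindelof:
  fixes \<alpha> :: real and f :: "quat \<Rightarrow> quat" and M :: real
  defines "\<Omega> \<equiv> circ_cone (pi / \<alpha>)"
  assumes \<alpha>: "\<alpha> > 1/2"
    and reg: "slice_regular f \<Omega>"
    and cont: "continuous_on (closure \<Omega>) f"
    and ord: "slice_order f \<Omega> < ereal \<alpha>"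
    and M: "M \<ge> 0"
    and frontier: "\<forall>q \<in> frontier \<Omega>. norm (f q) \<le> M"
    and I: "I \<in> imag_units" and z0: "z0 \<in> sector (pi / \<alpha> / 2)"
  shows "norm (slice_fun f I c z0) \<le> M * norm c"
proof -
  define A where "A = pi / \<alpha> / 2"
  have \<alpha>0: "\<alpha> > 0" using \<alpha> by simp
  have A: "0 < A" "A < pi" using cone_angle_bounds[OF \<alpha>] by (simp_all add: A_def)
  have in_cone_iff: "iota I z \<in> \<Omega> \<longleftrightarrow> z \<in> sector A" for z
    unfolding \<Omega>_def A_def by (rule iota_in_cone_iff[OF cone_angle_bounds[OF \<alpha>] I])
  have open_cone: "open \<Omega>" using reg by (simp add: slice_regular_def)
  have closure_in: "iota I ` closure (sector A) \<subseteq> closure \<Omega>"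
    using in_cone_iff by (intro image_closure_subset[OF continuous_iota closed_closure]) (auto intro: closure_subset[THEN subsetD])
  obtain \<gamma> \<beta> where ord_\<gamma>: "slice_order f \<Omega> < ereal \<gamma>" and \<gamma>\<beta>: "0 < \<gamma>" "\<gamma> < \<beta>" "\<beta> < \<alpha>"
    using exponents_between[OF ord \<alpha>0] by blast
  have "\<beta> * A = (\<beta> / \<alpha>) * (pi / 2)" by (simp add: A_def)
  also have "\<dots> < 1 * (pi / 2)" using \<gamma>\<beta> \<alpha>0 by (intro mult_strict_right_mono) auto
  finally have \<beta>A: "\<beta> * A < pi / 2" by simp
  obtain R0 where R0: "\<And>r. r \<ge> R0 \<Longrightarrow> max_mod f \<Omega> r \<le> exp (r powr \<gamma>)"
    using max_mod_growth[OF ord_\<gamma> \<gamma>\<beta>(1)] by blast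
  show ?thesis
  proof (rule phragmen_lindelof_sector[OF A \<gamma>\<beta>(1,2) \<beta>A, where H="slice_fun f I c"])
    show "slice_fun f I c holomorphic_on sector A"
      using in_cone_iff by (intro slice_fun_holomorphic[OF reg I open_sector]) auto
    show "continuous_on (closure (sector A)) (slice_fun f I c)"
      unfolding slice_fun_def[abs_def] using closure_in
      by (intro bounded_linear.continuous_on[OF bounded_linear_qcomp[OF I]]
          bounded_linear.continuous_on[OF bounded_linear_qmult_right]
          continuous_on_compose2[OF cont continuous_iota]) auto
  next
    fix z assume z: "z \<in> closure (sector A)" "z \<notin> sector A"
    have "iota I z \<in> closure \<Omega>" "iota I z \<notin> \<Omega>" using z closure_in in_cone_iff by auto
    then have "iota I z \<in> frontier \<Omega>" by (simp add: frontier_def interior_open[OF open_cone])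
    then have "norm (f (iota I z)) \<le> M" using frontier by blast
    then have "norm (f (iota I z)) * norm c \<le> M * norm c" by (rule mult_right_mono) simp
    with norm_slice_fun[OF I, of f c z] show "norm (slice_fun f I c z) \<le> M * norm c" by linarith
  next
    fix z assume z: "z \<in> closure (sector A)" "norm z \<ge> R0"
    have "iota I z \<in> closure \<Omega>" using z(1) closure_in by blast
    from max_mod_upper[OF cont this]
    have "norm (f (iota I z)) \<le> max_mod f \<Omega> (norm z)" by (simp add: norm_iota[OF I])
    also have "\<dots> \<le> exp (norm z powr \<gamma>)" by (rule R0[OF z(2)])
    finally have "norm (f (iota I z)) * norm c \<le> norm c * exp (norm z powr \<gamma>)"
      by (simp add: mult.commute mult_left_mono)
    with norm_slice_fun[OF I, of f c z]
    show "norm (slice_fun f I c z) \<le> norm c * exp (norm z powr \<gamma>)" by linarith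
  next
    show "0 \<le> M * norm c" using M by simp
    show "z0 \<in> sector A" using z0 by (simp add: A_def)
  qed
qed

theorem theorem3p2:
  fixes \<alpha> :: real and f :: "quat \<Rightarrow> quat" and M :: real
  assumes "\<alpha> > 1/2"
    and "slice_regular f (circ_cone (pi / \<alpha>))"
    and "continuous_on (closure (circ_cone (pi / \<alpha>))) f"
    and "slice_order f (circ_cone (pi / \<alpha>)) < ereal \<alpha>"
    and "M \<ge> 0"
    and "\<forall>q \<in> frontier (circ_cone (pi / \<alpha>)). norm (f q) \<le> M"
  shows "\<forall>q \<in> circ_cone (pi / \<alpha>). norm (f q) \<le> M"
proof
  fix q assume q: "q \<in> circ_cone (pi / \<alpha>)"
  then obtain r I \<theta> where q_polar: "q = r *\<^sub>R qexpI I \<theta>" and I: "I \<in> imag_units"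
    unfolding circ_cone_def by blast
  define z where "z = complex_of_real r * cis \<theta>"
  have "iota I z = q" by (simp add: z_def iota_polar q_polar)
  then have "z \<in> sector (pi / \<alpha> / 2)"
    using q iota_in_cone_iff[OF cone_angle_bounds[OF assms(1)] I, of z] by simp
  from slice_phragmen_lindelof[OF assms I this, of "qconj (f q)"]
  have "(norm (f q))^2 \<le> M * norm (f q)"
    using \<open>iota I z = q\<close> by (simp add: slice_fun_def qcomp_mult_qconj qconj_norm norm_power)
  then show "norm (f q) \<le> M"
    using \<open>M \<ge> 0\<close> by (cases "f q = 0") (auto simp: power2_eq_square)
qed

end
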